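(* For $\alpha \in (0,d)$ and $\epsilon \in(0, \alpha]$, there exists a constant $C=C(\alpha,\epsilon)>0$ such that $$\|I_\alpha \mu \|_{BMO^{d-\alpha+\epsilon}(\mathbb{R}^d)} \leq C \|\mu\|_{\mathcal{M}^{d-\alpha}(\mathbb{R}^d)}$$ for all $\mu \in \mathcal{M}^{d-\alpha}(\mathbb{R}^d)$ such that $I_\alpha \mu \in L^1(K;\mathcal{H}^{d-\alpha+\epsilon}_\infty)$ for all compact sets $K \subset \mathbb{R}^d$.
   Context: For $\beta\in(0,d]$: $\mathcal{H}^{\beta}_{\infty}(E)= \inf \{\sum_{i} \omega_\beta r_i^\beta : E \subset \bigcup_{i} B(x_i,r_i) \}$, $\omega_\beta= \pi^{\beta/2}/\Gamma(\beta/2+1)$. $f$ is $\mathcal{H}^\beta_\infty$-quasicontinuous if for every $\eta>0$ there is an open $O$ with $\mathcal{H}^\beta_\infty(O)<\eta$ and $f|_{O^c}$ continuous. Choquet integral: $\int_A f\,d\mathcal{H}^\beta_\infty=\int_0^\infty \mathcal{H}^\beta_\infty(\{x\in A: f(x)>t\})\,dt$ for $f\ge0$; $L^1(K;\mathcal{H}^\beta_\infty)$ is the set of quasicontinuous $f$ with $\int_K|f|\,d\mathcal{H}^\beta_\infty<\infty$. $\|u\|_{BMO^{\beta}(\mathbb{R}^d)}= \sup_{Q} \inf_{c \in \mathbb{R}} l(Q)^{-\beta} \int_{Q} |u-c| \,d\mathcal{H}^{\beta}_\infty$, the supremum over all finite cubes $Q\subset\mathbb{R}^d$ with sides parallel to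 the coordinate axes, $l(Q)$ the side length. $\mathcal{M}^{\beta}(\mathbb{R}^d)$ is the space of locally finite signed Radon measures $\nu$ with $\|\nu\|_{\mathcal{M}^\beta}=\sup_{x\in\mathbb{R}^d,r>0} |\nu|(B(x,r))/r^\beta<\infty$. The Riesz potential is $I_\alpha \mu(x)= \frac{1}{\gamma(\alpha)} \int_{\mathbb{R}^d} \frac{d\mu(y)}{|x-y|^{d-\alpha}}$ with $\gamma(\alpha)>0$ the standard normalization constant. *)

theory Defs
  imports "HOL-Analysis.Analysis"
begin

definition omega_const :: "real \<Rightarrow> real" where
  "omega_const \<beta> = pi powr (\<beta> / 2) / Gamma (\<beta> / 2 + 1)"

text \<open>Hausdorff content of dimension beta, via countable covers by open balls.
  Finite covers are included, since radii may be 0 (empty balls).\<close>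
definition hcontent :: "real \<Rightarrow> 'a::euclidean_space set \<Rightarrow> ennreal" where
  "hcontent \<beta> E = (INF xr \<in> {(x :: nat \<Rightarrow> 'a, r :: nat \<Rightarrow> real).
        (\<forall>i. 0 \<le> r i) \<and> E \<subseteq> (\<Union>i. ball (x i) (r i))}.
      (\<Sum>i. ennreal (omega_const \<beta> * (snd xr i) powr \<beta>)))"

definition quasicontinuous :: "real \<Rightarrow> ('a::euclidean_space \<Rightarrow> real) \<Rightarrow> bool" where
  "quasicontinuous \<beta> f \<longleftrightarrow>
     (\<forall>\<eta>>0. \<exists>U. open U \<and> hcontent \<beta> U < ennreal \<eta> \<and> continuous_on (- U) f)"

definition choquet :: "real \<Rightarrow> 'a::euclidean_space set \<Rightarrow> ('a \<Rightarrow> real) \<Rightarrow> ennreal" where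
  "choquet \<beta> A f = (\<integral>\<^sup>+ t. indicator {0..} t * hcontent \<beta> {x \<in> A. f x > t} \<partial>lborel)"

definition L1_content :: "real \<Rightarrow> 'a::euclidean_space set \<Rightarrow> ('a \<Rightarrow> real) \<Rightarrow> bool" where
  "L1_content \<beta> K f \<longleftrightarrow> quasicontinuous \<beta> f \<and> choquet \<beta> K (\<lambda>x. \<bar>f x\<bar>) < \<infinity>"

definition bmo_norm :: "real \<Rightarrow> ('a::euclidean_space \<Rightarrow> real) \<Rightarrow> ennreal" where
  "bmo_norm \<beta> u = (SUP al \<in> {(a :: 'a, l :: real). 0 < l}.
      (INF c :: real. ennreal ((snd al) powr (- \<beta>)) *
          choquet \<beta> (cbox (fst al) (fst al + snd al *\<^sub>R One)) (\<lambda>x. \<bar>u x - c\<bar>)))"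

text \<open>A locally finite signed Radon measure on R^d, given by its Jordan decomposition
  (mu_p, mu_n): two mutually singular locally finite Borel measures; |nu| = mu_p + mu_n.\<close>
definition signed_radon :: "'a::euclidean_space measure \<Rightarrow> 'a measure \<Rightarrow> bool" where
  "signed_radon mp mn \<longleftrightarrow>
     sets mp = sets borel \<and> sets mn = sets borel \<and>
     (\<forall>x r. emeasure mp (ball x r) < \<infinity> \<and> emeasure mn (ball x r) < \<infinity>) \<and>
     (\<exists>A \<in> sets borel. emeasure mp A = 0 \<and> emeasure mn (UNIV - A) = 0)"

definition morrey_norm :: "real \<Rightarrow> 'a::euclidean_space measure \<Rightarrow> 'a measure \<Rightarrow> ennreal" where
  "morrey_norm \<beta> mp mn = (SUP xr \<in> {(x :: 'a, r :: real). 0 < r}.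
      (emeasure mp (ball (fst xr) (snd xr)) + emeasure mn (ball (fst xr) (snd xr)))
        / ennreal ((snd xr) powr \<beta>))"

definition riesz_const :: "real \<Rightarrow> real \<Rightarrow> real" where
  "riesz_const d \<alpha> = pi powr (d / 2) * 2 powr \<alpha> * Gamma (\<alpha> / 2) / Gamma ((d - \<alpha>) / 2)"

definition riesz_kernel :: "real \<Rightarrow> 'a::euclidean_space \<Rightarrow> 'a \<Rightarrow> ennreal" where
  "riesz_kernel \<alpha> x y = (if y = x then \<infinity> else ennreal (dist x y powr (\<alpha> - real DIM('a))))"

text \<open>Riesz potential of nu = mu_p - mu_n, defined where the integral converges absolutely
  (convention: value 0 elsewhere).\<close>
definition riesz_pot :: "real \<Rightarrow> 'a::euclidean_space measure \<Rightarrow> 'a measure \<Rightarrow> 'a \<Rightarrow> real" where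
  "riesz_pot \<alpha> mp mn x =
     (let P = (\<integral>\<^sup>+ y. riesz_kernel \<alpha> x y \<partial>mp); N = (\<integral>\<^sup>+ y. riesz_kernel \<alpha> x y \<partial>mn)
      in if P < \<infinity> \<and> N < \<infinity>
         then (enn2real P - enn2real N) / riesz_const (real DIM('a)) \<alpha> else 0)"

end

theory Submission
  imports Defs
begin

text \<open>
  Fix a cube Q of side l with centre z and put R = d l, so that Q lies in the ball B(z,R), and
  split the potential of nu = mu_p - mu_n into the contributions of B(z,2R) (the local part) and of
  its complement (the far part). Write s = d - alpha and let M bound |nu|(B(w,r)) / r^s.
  The kernel |x-y|^(-s) is Lipschitz on Q away from B(z,2R), with constant ~ R |z-y|^(-s-1), and a
  dyadic decomposition gives integral of |z-y|^(-s-1) over the complement of B(z,2R) ~ M / R; so on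
  Q the far part differs from its value c at z by O(M).
  If the local part exceeds t at x, a dyadic decomposition of B(x,4R) yields a ball B(x,r) whose
  |nu|-mass exceeds kappa t r^(s+eps/2) R^(-eps/2); together with |nu|(B(x,r)) <= M r^s this gives
  r^(s+eps) ~< M R^eps |nu|(B(x,r)) / t^2, and the Vitali covering lemma bounds the
  (s+eps)-dimensional Hausdorff content of the level set by ~ M^2 R^(s+eps) / t^2.
  The Choquet integral of |I_alpha nu - c| over Q is then at most (trivial bound up to t ~ M) plus
  (integral of the t^(-2) tail), i.e. ~ M l^(s+eps).
\<close>

section \<open>Hausdorff content and the variation measure\<close>

lemma omega_const_pos: "0 \<le> b \<Longrightarrow> 0 < omega_const b"
  unfolding omega_const_def by (auto intro!: divide_pos_pos Gamma_real_pos)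

lemma hcontent_le_cover:
  assumes "\<And>i. 0 \<le> r i" "E \<subseteq> (\<Union>i. ball (x i) (r i))"
  shows "hcontent b E \<le> (\<Sum>i. ennreal (omega_const b * r i powr b))"
  unfolding hcontent_def by (rule INF_lower2[of "(x, r)"]) (use assms in auto)

lemma hcontent_mono: "E \<subseteq> F \<Longrightarrow> hcontent b E \<le> hcontent b F"
  unfolding hcontent_def by (rule INF_superset_mono) auto

lemma hcontent_ball_le:
  assumes "0 \<le> R"
  shows "hcontent b (ball z R) \<le> ennreal (omega_const b * R powr b)"
proof -
  have "hcontent b (ball z R) \<le> (\<Sum>i. ennreal (omega_const b * (if i = 0 then R else 0) powr b))"
    by (rule hcontent_le_cover[where x = "\<lambda>_. z"]) (use assms in auto)
  also have "\<dots> = (\<Sum>i. if i = 0 then ennreal (omega_const b * R powr b) else 0)"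
    by (intro suminf_cong) simp
  also have "\<dots> = ennreal (omega_const b * R powr b)"
    using sums_single[of 0 "\<lambda>_. ennreal (omega_const b * R powr b)"] by (simp add: sums_iff)
  finally show ?thesis .
qed

lemma hcontent_le_countable_cover:
  assumes I: "countable I" and r: "\<And>i. i \<in> I \<Longrightarrow> 0 \<le> r i"
    and cover: "E \<subseteq> (\<Union>i\<in>I. ball (x i) (r i))"
  shows "hcontent b E \<le> (\<integral>\<^sup>+ i. ennreal (omega_const b * r i powr b) \<partial>count_space I)"
proof -
  define J where "J = to_nat_on I ` I"
  define r' where "r' n = (if n \<in> J then r (from_nat_into I n) else 0)" for n
  define f where "f n = ennreal (omega_const b * r' n powr b)" for n
  have "E \<subseteq> (\<Union>n. ball (x (from_nat_into I n)) (r' n))"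
  proof
    fix e assume "e \<in> E"
    then obtain i where "i \<in> I" "e \<in> ball (x i) (r i)" using cover by blast
    then show "e \<in> (\<Union>n. ball (x (from_nat_into I n)) (r' n))"
      using I by (auto simp: r'_def J_def intro!: exI[of _ "to_nat_on I i"])
  qed
  then have "hcontent b E \<le> (\<Sum>n. f n)"
    unfolding f_def by (rule hcontent_le_cover[rotated]) (use r I in \<open>auto simp: r'_def J_def from_nat_into\<close>)
  also have "\<dots> = (\<integral>\<^sup>+ n. f n * indicator J n \<partial>count_space UNIV)"
    by (subst nn_integral_count_space_nat[symmetric], intro nn_integral_cong) (simp add: f_def r'_def)
  also have "\<dots> = (\<integral>\<^sup>+ n. f n \<partial>count_space J)"
    by (simp add: nn_integral_count_space_indicator)
  also have "\<dots> = (\<integral>\<^sup>+ i. f (to_nat_on I i) \<partial>count_space I)"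
    using I by (intro nn_integral_bij_count_space[symmetric]) (auto simp: J_def bij_betw_def)
  also have "\<dots> = (\<integral>\<^sup>+ i. ennreal (omega_const b * r i powr b) \<partial>count_space I)"
    using I by (intro nn_integral_cong) (simp add: f_def r'_def J_def)
  finally show ?thesis .
qed

definition variation :: "'a::euclidean_space measure \<Rightarrow> 'a measure \<Rightarrow> 'a measure" where
  "variation mp mn = measure_of UNIV (sets borel) (\<lambda>A. emeasure mp A + emeasure mn A)"

lemma sets_variation [simp, measurable_cong]: "sets (variation mp mn) = sets borel"
  unfolding variation_def by (simp add: sets.sigma_sets_eq[of borel, simplified])

lemma emeasure_variation:
  assumes "sets mp = sets borel" "sets mn = sets borel" "A \<in> sets borel"
  shows "emeasure (variation mp mn) A = emeasure mp A + emeasure mn A"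
  unfolding variation_def
proof (rule emeasure_measure_of_sigma[OF _ _ _ assms(3)])
  show "sigma_algebra UNIV (sets borel)"
    using sets.sigma_algebra_axioms[of borel] by simp
  show "positive (sets borel) (\<lambda>A. emeasure mp A + emeasure mn A)"
    by (simp add: positive_def)
  show "countably_additive (sets borel) (\<lambda>A. emeasure mp A + emeasure mn A)"
    using assms by (auto simp: countably_additive_def suminf_add[symmetric] suminf_emeasure)
qed

lemma emeasure_le_variation:
  assumes "sets mp = sets borel" "sets mn = sets borel" "A \<in> sets borel"
  shows "emeasure mp A \<le> emeasure (variation mp mn) A" "emeasure mn A \<le> emeasure (variation mp mn) A"
  using assms by (simp_all add: emeasure_variation add_increasing add_increasing2)

lemma variation_ball_le_morrey_norm:
  assumes "sets mp = sets borel" "sets mn = sets borel" "0 < r"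
  shows "emeasure (variation mp mn) (ball x r) \<le> morrey_norm s mp mn * ennreal (r powr s)"
proof -
  let ?m = "emeasure mp (ball x r) + emeasure mn (ball x r)"
  have "?m / ennreal (r powr s) \<le> morrey_norm s mp mn"
    unfolding morrey_norm_def by (rule SUP_upper2[of "(x, r)"]) (use assms in auto)
  then have "?m / ennreal (r powr s) * ennreal (r powr s) \<le> morrey_norm s mp mn * ennreal (r powr s)"
    by (rule mult_right_mono) simp
  moreover have "?m / ennreal (r powr s) * ennreal (r powr s) = ?m"
    using assms(3) by (simp add: ennreal_divide_times divide_ennreal)
  ultimately show ?thesis using assms by (simp add: emeasure_variation)
qed

lemma half_powr_less_one: "0 < d \<Longrightarrow> (1/2::real) powr d < 1"
  using gr_one_powr[of 2 d] by (simp add: powr_divide)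

lemma exists_power2_le_less:
  assumes "1 \<le> (x::real)"
  obtains k :: nat where "2 ^ k \<le> x" "x < 2 ^ (k + 1)"
proof -
  define k where "k = nat \<lfloor>log 2 x\<rfloor>"
  have "real k \<le> log 2 x" "log 2 x < real k + 1"
    using assms by (auto simp: k_def of_nat_nat)
  then have "2 powr real k \<le> x" "x < 2 powr (real k + 1)"
    using assms by (simp_all add: powr_le_iff less_powr_iff)
  then show thesis using that[of k] by (simp add: powr_add powr_realpow)
qed

lemma exists_power2_less_le:
  assumes "1 < (x::real)"
  obtains k :: nat where "2 ^ k < x" "x \<le> 2 ^ (k + 1)"
proof -
  define k where "k = nat (\<lceil>log 2 x\<rceil> - 1)"
  have "real k < log 2 x" "log 2 x \<le> real k + 1"
    using assms ceiling_correct[of "log 2 x"] by (auto simp: k_def of_nat_nat)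
  then have "2 powr real k < x" "x \<le> 2 powr (real k + 1)"
    using assms by (simp_all add: powr_less_iff le_powr_iff)
  then show thesis using that[of k] by (simp add: powr_add powr_realpow)
qed

lemma ennreal_le_suminf: "(f :: nat \<Rightarrow> ennreal) k \<le> (\<Sum>i. f i)"
  using ennreal_suminf_lessD[of f "f k" k] by (auto simp: not_le[symmetric])

lemma abs_powr_neg_diff_le:
  fixes a b s :: real
  assumes "0 < a" "0 < b" "0 < s"
  shows "\<bar>a powr (-s) - b powr (-s)\<bar> \<le> s * \<bar>a - b\<bar> * min a b powr (-s-1)"
proof -
  have main: "\<bar>p powr (-s) - q powr (-s)\<bar> \<le> s * (q - p) * p powr (-s-1)"
    if "0 < p" "p < q" for p q :: real
  proof -
    have "DERIV (\<lambda>t. t powr (-s)) t :> -s * t powr (-s-1)" if "p \<le> t" "t \<le> q" for t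
      using \<open>0 < p\<close> that by (auto intro!: derivative_eq_intros simp: powr_diff)
    from MVT2[OF \<open>p < q\<close> this] obtain \<xi>
      where \<xi>: "p < \<xi>" "q powr (-s) - p powr (-s) = (q - p) * (-s * \<xi> powr (-s-1))"
      by blast
    have "p powr (-s) - q powr (-s) = s * (q - p) * \<xi> powr (-s-1)"
      using \<xi>(2) by (simp add: algebra_simps)
    moreover have "0 \<le> s * (q - p) * \<xi> powr (-s-1)"
      using \<open>p < q\<close> assms(3) by simp
    moreover have "s * (q - p) * \<xi> powr (-s-1) \<le> s * (q - p) * p powr (-s-1)"
      using \<xi> \<open>0 < p\<close> \<open>p < q\<close> assms(3) by (intro mult_left_mono powr_mono2') auto
    ultimately show ?thesis by simp
  qed
  consider "a = b" | "a < b" | "b < a" by linarith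
  then show ?thesis
    using main[of a b] main[of b a] assms by cases (simp_all add: min_def abs_minus_commute)
qed

lemma riesz_kernel_eq:
  "y \<noteq> x \<Longrightarrow> riesz_kernel \<alpha> x y = ennreal (dist x y powr (- (real DIM('a) - \<alpha>)))"
  for x y :: "'a::euclidean_space"
  by (simp add: riesz_kernel_def)

lemma borel_measurable_riesz_kernel [measurable]:
  "riesz_kernel \<alpha> x \<in> borel_measurable borel"
  unfolding riesz_kernel_def by measurable

section \<open>The far part of the potential\<close>

lemma dist_powr_outside_ball_le_dyadic_series:
  fixes y z :: "'a::real_normed_vector"
  assumes "0 < \<rho>" "0 < s"
  defines "q \<equiv> \<lambda>k::nat. 2^k * \<rho>"
  shows "ennreal (dist z y powr (-s-1)) * indicator (- ball z \<rho>) y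
    \<le> (\<Sum>k. ennreal (q k powr (-s-1)) * indicator (ball z (2 * q k)) y)"
proof (cases "y \<in> ball z \<rho>")
  case False
  then obtain k :: nat where "2^k \<le> dist z y / \<rho>" "dist z y / \<rho> < 2^(k+1)"
    using exists_power2_le_less[of "dist z y / \<rho>"] \<open>0 < \<rho>\<close> by auto
  then have k: "q k \<le> dist z y" "dist z y < 2 * q k"
    using \<open>0 < \<rho>\<close> by (simp_all add: q_def pos_le_divide_eq pos_divide_less_eq)
  then have "dist z y powr (-s-1) \<le> q k powr (-s-1)"
    using \<open>0 < \<rho>\<close> \<open>0 < s\<close> by (intro powr_mono2') (auto simp: q_def)
  then have "ennreal (dist z y powr (-s-1)) * indicator (- ball z \<rho>) y
      \<le> ennreal (q k powr (-s-1)) * indicator (ball z (2 * q k)) y"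
    using False k by (simp add: indicator_def)
  also have "\<dots> \<le> (\<Sum>k. ennreal (q k powr (-s-1)) * indicator (ball z (2 * q k)) y)"
    by (rule ennreal_le_suminf)
  finally show ?thesis .
qed simp

lemma nn_integral_dist_powr_outside_ball_le:
  fixes \<mu> :: "'a::euclidean_space measure"
  assumes sets: "sets \<mu> = sets borel"
    and growth: "\<And>w r. 0 < r \<Longrightarrow> emeasure \<mu> (ball w r) \<le> ennreal (M * r powr s)"
    and "0 < \<rho>" "0 < s" "0 \<le> M"
  shows "(\<integral>\<^sup>+ y. ennreal (dist z y powr (-s-1)) * indicator (- ball z \<rho>) y \<partial>\<mu>)
          \<le> ennreal (2 powr (s+1) * M / \<rho>)"
proof -
  define q :: "nat \<Rightarrow> real" where "q k = 2^k * \<rho>" for k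
  have q: "0 < q k" for k using assms by (simp add: q_def)
  have "(\<integral>\<^sup>+ y. ennreal (dist z y powr (-s-1)) * indicator (- ball z \<rho>) y \<partial>\<mu>)
      \<le> (\<integral>\<^sup>+ y. (\<Sum>k. ennreal (q k powr (-s-1)) * indicator (ball z (2 * q k)) y) \<partial>\<mu>)"
    unfolding q_def using assms by (intro nn_integral_mono dist_powr_outside_ball_le_dyadic_series)
  also have "\<dots> = (\<Sum>k. \<integral>\<^sup>+ y. ennreal (q k powr (-s-1)) * indicator (ball z (2 * q k)) y \<partial>\<mu>)"
    by (intro nn_integral_suminf borel_measurable_times_ennreal borel_measurable_const
        borel_measurable_indicator) (simp add: sets)
  also have "\<dots> = (\<Sum>k. ennreal (q k powr (-s-1)) * emeasure \<mu> (ball z (2 * q k)))"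
    by (simp add: nn_integral_cmult_indicator sets)
  also have "\<dots> \<le> (\<Sum>k. ennreal (2 powr s * M / \<rho> * (1/2)^k))"
  proof (intro suminf_le summableI)
    fix k
    have "ennreal (q k powr (-s-1)) * emeasure \<mu> (ball z (2 * q k))
        \<le> ennreal (q k powr (-s-1)) * ennreal (M * (2 * q k) powr s)"
      using q by (intro mult_left_mono growth) auto
    also have "\<dots> = ennreal (q k powr (-s-1) * (2 * q k) powr s * M)"
      using \<open>0 \<le> M\<close> by (simp add: ennreal_mult[symmetric] mult_ac)
    also have "q k powr (-s-1) * (2 * q k) powr s = 2 powr s / q k"
      using q[of k] by (simp add: powr_mult powr_diff powr_minus divide_simps)
    also have "2 powr s / q k * M = 2 powr s * M / \<rho> * (1/2)^k"
      using \<open>0 < \<rho>\<close> by (simp add: q_def power_one_over divide_simps)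
    finally show "ennreal (q k powr (-s-1)) * emeasure \<mu> (ball z (2 * q k))
        \<le> ennreal (2 powr s * M / \<rho> * (1/2)^k)" .
  qed
  also have "\<dots> = ennreal (2 powr s * M / \<rho> * 2)"
    using sums_mult[OF geometric_sums[of "1/2::real"], of "2 powr s * M / \<rho>"] assms
    by (intro suminf_ennreal_eq) auto
  finally show ?thesis by (simp add: powr_add mult_ac)
qed

lemma riesz_kernel_far_le:
  fixes x y z :: "'a::euclidean_space"
  assumes s: "s = real DIM('a) - \<alpha>" "0 < s" and x: "dist z x < R" and y: "y \<notin> ball z (2*R)"
  shows "riesz_kernel \<alpha> x y \<le> riesz_kernel \<alpha> z y + ennreal (s * R * 2 powr (s+1) * dist z y powr (-s-1))"
    and "riesz_kernel \<alpha> z y \<le> riesz_kernel \<alpha> x y + ennreal (s * R * 2 powr (s+1) * dist z y powr (-s-1))"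
proof -
  have "0 < R" using x zero_le_dist[of z x] by linarith
  have "2*R \<le> dist z y" using y by simp
  have close: "\<bar>dist x y - dist z y\<bar> \<le> R"
    using dist_triangle[of x y z] dist_triangle[of z y x] x by (simp add: dist_commute abs_le_iff)
  then have pos: "0 < dist z y" "dist z y / 2 \<le> min (dist x y) (dist z y)"
    using \<open>0 < R\<close> \<open>2*R \<le> dist z y\<close> by auto
  have "\<bar>dist x y powr (-s) - dist z y powr (-s)\<bar>
      \<le> s * \<bar>dist x y - dist z y\<bar> * min (dist x y) (dist z y) powr (-s-1)"
    using pos s by (intro abs_powr_neg_diff_le) auto
  also have "\<dots> \<le> s * R * (dist z y / 2) powr (-s-1)"
    using close pos s by (intro mult_mono powr_mono2') auto
  also have "(dist z y / 2) powr (-s-1) = 2 powr (s+1) * dist z y powr (-s-1)"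
  proof -
    have "(2::real) powr (-s-1) = inverse (2 powr (s+1))"
      by (simp add: powr_minus[symmetric])
    then show ?thesis using pos by (simp add: powr_divide field_simps)
  qed
  finally have diff: "\<bar>dist x y powr (-s) - dist z y powr (-s)\<bar> \<le> s * R * 2 powr (s+1) * dist z y powr (-s-1)"
    by (simp add: mult.assoc)
  have "y \<noteq> x" "y \<noteq> z" using pos by auto
  then show "riesz_kernel \<alpha> x y \<le> riesz_kernel \<alpha> z y + ennreal (s * R * 2 powr (s+1) * dist z y powr (-s-1))"
    and "riesz_kernel \<alpha> z y \<le> riesz_kernel \<alpha> x y + ennreal (s * R * 2 powr (s+1) * dist z y powr (-s-1))"
    using diff s \<open>0 < R\<close> by (auto simp: riesz_kernel_eq ennreal_plus[symmetric] simp del: ennreal_plus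
        intro!: ennreal_leI)
qed

lemma nn_integral_outside_ball_le_shift:
  fixes \<mu> :: "'a::euclidean_space measure" and f g :: "'a \<Rightarrow> ennreal"
  assumes sets: "sets \<mu> = sets borel" and [measurable]: "f \<in> borel_measurable borel" "g \<in> borel_measurable borel"
    and growth: "\<And>w r. 0 < r \<Longrightarrow> emeasure \<mu> (ball w r) \<le> ennreal (M * r powr s)"
    and "0 < s" "0 \<le> M" "0 < R"
    and shift: "\<And>y. y \<notin> ball z (2*R) \<Longrightarrow> f y \<le> g y + ennreal (s * R * 2 powr (s+1) * dist z y powr (-s-1))"
  shows "(\<integral>\<^sup>+ y. f y * indicator (- ball z (2*R)) y \<partial>\<mu>)
    \<le> (\<integral>\<^sup>+ y. g y * indicator (- ball z (2*R)) y \<partial>\<mu>) + ennreal (s * 2 powr (2 * s + 1) * M)"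
proof -
  note sets [measurable_cong]
  define c where "c = s * R * 2 powr (s+1)"
  define e where "e y = ennreal (dist z y powr (-s-1)) * indicator (- ball z (2*R)) y" for y
  have "(\<integral>\<^sup>+ y. f y * indicator (- ball z (2*R)) y \<partial>\<mu>)
      \<le> (\<integral>\<^sup>+ y. g y * indicator (- ball z (2*R)) y + ennreal c * e y \<partial>\<mu>)"
    using shift \<open>0 < s\<close> \<open>0 < R\<close>
    by (intro nn_integral_mono) (auto simp: c_def e_def indicator_def ennreal_mult[symmetric] mult.assoc)
  also have "\<dots> = (\<integral>\<^sup>+ y. g y * indicator (- ball z (2*R)) y \<partial>\<mu>) + ennreal c * (\<integral>\<^sup>+ y. e y \<partial>\<mu>)"
    unfolding e_def by (simp add: nn_integral_add nn_integral_cmult)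
  also have "ennreal c * (\<integral>\<^sup>+ y. e y \<partial>\<mu>) \<le> ennreal c * ennreal (2 powr (s+1) * M / (2*R))"
    unfolding e_def using assms by (intro mult_left_mono nn_integral_dist_powr_outside_ball_le) auto
  also have "\<dots> = ennreal (s * 2 powr (2 * s + 1) * M)"
  proof -
    have "2 powr (s+1) * 2 powr (s+1) = (2::real) powr (1 + (2 * s + 1))"
      by (simp add: powr_add[symmetric] algebra_simps)
    then have "c * (2 powr (s+1) * M / (2*R)) = s * 2 powr (2 * s + 1) * M"
      using \<open>0 < R\<close> by (simp add: c_def powr_add field_simps)
    then show ?thesis
      using \<open>0 < s\<close> \<open>0 < R\<close> \<open>0 \<le> M\<close> by (simp add: c_def ennreal_mult[symmetric])
  qed
  finally show ?thesis by (simp add: add_left_mono)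
qed

lemma nn_integral_riesz_kernel_outside_ball_le:
  fixes \<mu> :: "'a::euclidean_space measure"
  assumes sets: "sets \<mu> = sets borel"
    and growth: "\<And>w r. 0 < r \<Longrightarrow> emeasure \<mu> (ball w r) \<le> ennreal (M * r powr s)"
    and s: "s = real DIM('a) - \<alpha>" "0 < s" and "0 \<le> M" and x: "dist z x < R"
  defines "F \<equiv> \<lambda>w. (\<integral>\<^sup>+ y. riesz_kernel \<alpha> w y * indicator (- ball z (2*R)) y \<partial>\<mu>)"
  shows "F x \<le> F z + ennreal (s * 2 powr (2 * s + 1) * M)" and "F z \<le> F x + ennreal (s * 2 powr (2 * s + 1) * M)"
proof -
  have "0 < R" using x zero_le_dist[of z x] by linarith
  then show "F x \<le> F z + ennreal (s * 2 powr (2 * s + 1) * M)" "F z \<le> F x + ennreal (s * 2 powr (2 * s + 1) * M)"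
    unfolding F_def using riesz_kernel_far_le[OF s x]
    by (auto intro!: nn_integral_outside_ball_le_shift[OF sets _ _ growth s(2) \<open>0 \<le> M\<close>])
qed

section \<open>Oscillation of the potential on a ball\<close>

definition signed_potential :: "real \<Rightarrow> ennreal \<Rightarrow> ennreal \<Rightarrow> real" where
  "signed_potential \<gamma> P N = (if P < \<infinity> \<and> N < \<infinity> then (enn2real P - enn2real N) / \<gamma> else 0)"

lemma riesz_pot_eq_signed_potential:
  "riesz_pot \<alpha> mp mn x = signed_potential (riesz_const (real DIM('a)) \<alpha>)
     (\<integral>\<^sup>+ y. riesz_kernel \<alpha> x y \<partial>mp) (\<integral>\<^sup>+ y. riesz_kernel \<alpha> x y \<partial>mn)"
  for x :: "'a::euclidean_space"
  by (simp add: riesz_pot_def signed_potential_def Let_def)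

lemma abs_signed_potential_diff_le:
  fixes L1 L2 F1 F2 G1 G2 :: ennreal
  assumes "0 < \<gamma>" "0 \<le> e"
    and F1: "F1 \<le> G1 + ennreal e" "G1 \<le> F1 + ennreal e"
    and F2: "F2 \<le> G2 + ennreal e" "G2 \<le> F2 + ennreal e"
  shows "ennreal (\<gamma> * \<bar>signed_potential \<gamma> (L1 + F1) (L2 + F2) - signed_potential \<gamma> G1 G2\<bar>)
    \<le> L1 + L2 + ennreal (2 * e)"
proof (cases "G1 < \<infinity> \<and> G2 < \<infinity>")
  case False
  then have "G1 = \<infinity> \<or> G2 = \<infinity>" by (simp add: less_top[symmetric])
  then have "F1 + ennreal e = \<infinity> \<or> F2 + ennreal e = \<infinity>"
    using F1(2) F2(2) by (auto simp: top_unique)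
  then have "F1 = \<infinity> \<or> F2 = \<infinity>" by simp
  then show ?thesis using False by (auto simp: signed_potential_def)
next
  case G: True
  then have "G1 + ennreal e < \<infinity>" "G2 + ennreal e < \<infinity>"
    by (simp_all add: less_top[symmetric])
  then have F: "F1 < \<infinity>" "F2 < \<infinity>"
    using F1(1) F2(1) by (auto intro: le_less_trans)
  show ?thesis
  proof (cases "L1 < \<infinity> \<and> L2 < \<infinity>")
    case False
    then have "L1 = \<infinity> \<or> L2 = \<infinity>" by (simp add: less_top[symmetric])
    then show ?thesis by auto
  next
    case L: True
    define f1 f2 g1 g2 l1 l2 where "f1 = enn2real F1" "f2 = enn2real F2" "g1 = enn2real G1"
      "g2 = enn2real G2" "l1 = enn2real L1" "l2 = enn2real L2"
    have fg: "F1 = ennreal f1" "F2 = ennreal f2" "G1 = ennreal g1" "G2 = ennreal g2"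
      "L1 = ennreal l1" "L2 = ennreal l2"
      using F G L by (simp_all add: f1_f2_g1_g2_l1_l2_def less_top)
    have nonneg: "0 \<le> f1" "0 \<le> f2" "0 \<le> g1" "0 \<le> g2" "0 \<le> l1" "0 \<le> l2"
      by (simp_all add: f1_f2_g1_g2_l1_l2_def)
    have "f1 \<le> g1 + e" "g1 \<le> f1 + e" "f2 \<le> g2 + e" "g2 \<le> f2 + e"
      using F1 F2 nonneg \<open>0 \<le> e\<close> unfolding fg by (simp_all add: ennreal_plus[symmetric] del: ennreal_plus)
    then have "\<bar>(l1 + f1 - (l2 + f2)) - (g1 - g2)\<bar> \<le> l1 + l2 + 2 * e"
      using nonneg by linarith
    moreover have "\<gamma> * \<bar>(l1 + f1 - (l2 + f2)) / \<gamma> - (g1 - g2) / \<gamma>\<bar> = \<bar>(l1 + f1 - (l2 + f2)) - (g1 - g2)\<bar>"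
      using \<open>0 < \<gamma>\<close> by (simp add: diff_divide_distrib[symmetric] abs_divide)
    ultimately show ?thesis
      using nonneg \<open>0 \<le> e\<close> unfolding fg
      by (simp add: signed_potential_def ennreal_plus[symmetric] del: ennreal_plus)
  qed
qed

lemma riesz_const_pos: "0 < \<alpha> \<Longrightarrow> \<alpha> < n \<Longrightarrow> 0 < riesz_const n \<alpha>"
  unfolding riesz_const_def by (auto intro!: divide_pos_pos mult_pos_pos Gamma_real_pos)

lemma nn_integral_split_indicator:
  assumes "f \<in> borel_measurable M" "B \<in> sets M"
  shows "(\<integral>\<^sup>+ y. f y \<partial>M) = (\<integral>\<^sup>+ y. f y * indicator B y \<partial>M) + (\<integral>\<^sup>+ y. f y * indicator (- B) y \<partial>M)"
proof -
  have "(\<integral>\<^sup>+ y. f y \<partial>M) = (\<integral>\<^sup>+ y. f y * indicator B y + f y * indicator (- B) y \<partial>M)"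
    by (intro nn_integral_cong) (simp split: split_indicator)
  also have "\<dots> = (\<integral>\<^sup>+ y. f y * indicator B y \<partial>M) + (\<integral>\<^sup>+ y. f y * indicator (- B) y \<partial>M)"
    using assms by (intro nn_integral_add) auto
  finally show ?thesis .
qed

lemma riesz_pot_oscillation_le:
  fixes mp mn :: "'a::euclidean_space measure" and x z :: 'a
  assumes sets: "sets mp = sets borel" "sets mn = sets borel"
    and growth: "\<And>w r. 0 < r \<Longrightarrow> emeasure (variation mp mn) (ball w r) \<le> ennreal (M * r powr s)"
    and s: "s = real DIM('a) - \<alpha>" "0 < s" and "0 < \<alpha>" "0 \<le> M" and x: "dist z x < R"
  defines "\<gamma> \<equiv> riesz_const (real DIM('a)) \<alpha>"
    and "F \<equiv> \<lambda>\<mu> w. \<integral>\<^sup>+ y. riesz_kernel \<alpha> w y * indicator (- ball z (2*R)) y \<partial>\<mu>"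
    and "L \<equiv> \<lambda>\<mu>. \<integral>\<^sup>+ y. riesz_kernel \<alpha> x y * indicator (ball z (2*R)) y \<partial>\<mu>"
  shows "ennreal (\<gamma> * \<bar>riesz_pot \<alpha> mp mn x - signed_potential \<gamma> (F mp z) (F mn z)\<bar>)
    \<le> L mp + L mn + ennreal (2 * (s * 2 powr (2 * s + 1) * M))"
proof -
  have growth_mp: "emeasure mp (ball w r) \<le> ennreal (M * r powr s)"
    and growth_mn: "emeasure mn (ball w r) \<le> ennreal (M * r powr s)" if "0 < r" for w r
    using order_trans[OF emeasure_le_variation(1)[OF sets] growth[OF that]]
      order_trans[OF emeasure_le_variation(2)[OF sets] growth[OF that]] by simp_all
  have "(\<integral>\<^sup>+ y. riesz_kernel \<alpha> x y \<partial>\<mu>) = L \<mu> + F \<mu> x" if "sets \<mu> = sets borel" for \<mu>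
  proof -
    have "riesz_kernel \<alpha> x \<in> borel_measurable \<mu>"
      unfolding measurable_cong_sets[OF that refl] by (rule borel_measurable_riesz_kernel)
    then show ?thesis
      unfolding L_def F_def by (rule nn_integral_split_indicator) (simp add: that)
  qed
  then have pot: "riesz_pot \<alpha> mp mn x = signed_potential \<gamma> (L mp + F mp x) (L mn + F mn x)"
    using sets by (simp add: riesz_pot_eq_signed_potential \<gamma>_def)
  have "0 < \<gamma>" unfolding \<gamma>_def using s \<open>0 < \<alpha>\<close> by (intro riesz_const_pos) auto
  moreover note
    nn_integral_riesz_kernel_outside_ball_le[OF sets(1) growth_mp s \<open>0 \<le> M\<close> x]
    nn_integral_riesz_kernel_outside_ball_le[OF sets(2) growth_mn s \<open>0 \<le> M\<close> x]
  ultimately show ?thesis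
    unfolding pot F_def using s \<open>0 \<le> M\<close> by (intro abs_signed_potential_diff_le) simp_all
qed

section \<open>Level sets of the local part\<close>

lemma ennreal_suminf_const_top: "c \<noteq> 0 \<Longrightarrow> (\<Sum>i::nat. c) = (\<infinity> :: ennreal)"
  by (simp flip: nn_integral_count_space_nat add: ennreal_mult_top)

lemma riesz_kernel_ball_le_dyadic_series:
  fixes x y z :: "'a::euclidean_space"
  assumes s: "s = real DIM('a) - \<alpha>" "0 < s" and "0 < \<rho>" and x: "dist z x < \<rho>"
  defines "r \<equiv> \<lambda>k::nat. 2 * \<rho> * (1/2)^k"
  shows "riesz_kernel \<alpha> x y * indicator (ball z \<rho>) y
     \<le> (\<Sum>k. ennreal (2 powr s * r k powr (-s)) * indicator (ball x (r k) \<inter> ball z \<rho>) y)"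
proof (cases "y \<in> ball z \<rho>")
  case y: True
  have r: "0 < r k" "r k \<le> 2 * \<rho>" for k
    using \<open>0 < \<rho>\<close> by (auto simp: r_def power_le_one)
  show ?thesis
  proof (cases "y = x")
    case True
    have "(\<Sum>k. ennreal (2 powr s * (2 * \<rho>) powr (-s)))
        \<le> (\<Sum>k. ennreal (2 powr s * r k powr (-s)) * indicator (ball x (r k) \<inter> ball z \<rho>) y)"
      using True y r s by (intro suminf_le summableI) (auto intro!: powr_mono2' simp: indicator_def)
    moreover have "(\<Sum>k::nat. ennreal (2 powr s * (2 * \<rho>) powr (-s))) = \<infinity>"
      using \<open>0 < \<rho>\<close> by (intro ennreal_suminf_const_top) simp
    ultimately show ?thesis by (simp add: top_unique)
  next
    case False
    have "0 < dist x y" "dist x y < 2 * \<rho>"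
      using False dist_triangle[of x y z] x y by (auto simp: dist_commute)
    then have "1 < 2 * \<rho> / dist x y" by simp
    then obtain k :: nat where "2 ^ k < 2 * \<rho> / dist x y" "2 * \<rho> / dist x y \<le> 2 ^ (k + 1)"
      by (rule exists_power2_less_le)
    then have k: "r k / 2 \<le> dist x y" "dist x y < r k"
      using False \<open>0 < \<rho>\<close> by (auto simp: r_def field_simps power_one_over)
    have "dist x y powr (-s) \<le> (r k / 2) powr (-s)"
      using k r s by (intro powr_mono2') auto
    also have "\<dots> = 2 powr s * r k powr (-s)"
      using r by (simp add: powr_divide powr_minus divide_simps)
    finally have "riesz_kernel \<alpha> x y * indicator (ball z \<rho>) y
        \<le> ennreal (2 powr s * r k powr (-s)) * indicator (ball x (r k) \<inter> ball z \<rho>) y"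
      using False k y s by (simp add: riesz_kernel_eq indicator_def)
    also have "\<dots> \<le> (\<Sum>k. ennreal (2 powr s * r k powr (-s)) * indicator (ball x (r k) \<inter> ball z \<rho>) y)"
      by (rule ennreal_le_suminf)
    finally show ?thesis .
  qed
qed simp

lemma nn_integral_riesz_kernel_ball_le_dyadic_series:
  fixes \<mu> :: "'a::euclidean_space measure"
  assumes sets: "sets \<mu> = sets borel"
    and s: "s = real DIM('a) - \<alpha>" "0 < s" and "0 < \<rho>" and x: "dist z x < \<rho>"
  defines "r \<equiv> \<lambda>k::nat. 2 * \<rho> * (1/2)^k"
  shows "(\<integral>\<^sup>+ y. riesz_kernel \<alpha> x y * indicator (ball z \<rho>) y \<partial>\<mu>)
     \<le> (\<Sum>k. ennreal (2 powr s * r k powr (-s)) * emeasure \<mu> (ball x (r k) \<inter> ball z \<rho>))"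
proof -
  have "(\<integral>\<^sup>+ y. riesz_kernel \<alpha> x y * indicator (ball z \<rho>) y \<partial>\<mu>)
     \<le> (\<integral>\<^sup>+ y. (\<Sum>k. ennreal (2 powr s * r k powr (-s)) * indicator (ball x (r k) \<inter> ball z \<rho>) y) \<partial>\<mu>)"
    unfolding r_def by (intro nn_integral_mono riesz_kernel_ball_le_dyadic_series[OF s \<open>0 < \<rho>\<close> x])
  also have "\<dots> = (\<Sum>k. \<integral>\<^sup>+ y. ennreal (2 powr s * r k powr (-s)) * indicator (ball x (r k) \<inter> ball z \<rho>) y \<partial>\<mu>)"
    by (intro nn_integral_suminf borel_measurable_times_ennreal borel_measurable_const
        borel_measurable_indicator) (simp add: sets)
  also have "\<dots> = (\<Sum>k. ennreal (2 powr s * r k powr (-s)) * emeasure \<mu> (ball x (r k) \<inter> ball z \<rho>))"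
    by (simp add: nn_integral_cmult_indicator sets)
  finally show ?thesis .
qed

(* kappa is chosen so that, were every m (r k) at most kappa t r_k^(s+d) rho^(-d), the series would
   be dominated by a geometric series summing to exactly t. *)
lemma exists_dyadic_radius_mass_gt:
  fixes m :: "real \<Rightarrow> ennreal" and s d \<rho> t :: real
  assumes "0 < s" "0 < d" "0 < \<rho>" "0 \<le> t"
  defines "r \<equiv> \<lambda>k::nat. 2 * \<rho> * (1/2)^k" and "\<kappa> \<equiv> (1 - (1/2) powr d) / 2 powr (s + d)"
  assumes big: "ennreal t < (\<Sum>k. ennreal (2 powr s * r k powr (-s)) * m (r k))"
  shows "\<exists>k. ennreal (\<kappa> * t * r k powr (s + d) * \<rho> powr (-d)) < m (r k)"
proof (rule ccontr)
  assume "\<not> ?thesis"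
  then have small: "m (r k) \<le> ennreal (\<kappa> * t * r k powr (s + d) * \<rho> powr (-d))" for k
    by (simp add: not_less)
  have q: "(1/2::real) powr d < 1" "0 < \<kappa>"
    using half_powr_less_one[OF \<open>0 < d\<close>] by (simp_all add: \<kappa>_def)
  have r: "0 < r k" for k using \<open>0 < \<rho>\<close> by (simp add: r_def)
  have product: "2 powr s * r k powr (-s) * (\<kappa> * t * r k powr (s + d) * \<rho> powr (-d))
      = \<kappa> * t * 2 powr (s + d) * ((1/2) powr d)^k" for k
  proof -
    have "r k powr (-s) * r k powr (s + d) = r k powr d"
      by (simp add: powr_add[symmetric])
    then have "r k powr (-s) * r k powr (s + d) * \<rho> powr (-d) = (r k / \<rho>) powr d"
      using r[of k] \<open>0 < \<rho>\<close> by (simp add: powr_divide powr_minus_divide)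
    also have "\<dots> = 2 powr d * ((1/2) powr d)^k"
      using \<open>0 < \<rho>\<close> by (simp add: r_def powr_mult powr_realpow[symmetric] powr_powr mult.commute)
    finally show ?thesis by (simp add: powr_add field_simps)
  qed
  have "ennreal t < (\<Sum>k. ennreal (2 powr s * r k powr (-s)) * m (r k))" by (rule big)
  also have "\<dots> \<le> (\<Sum>k. ennreal (\<kappa> * t * 2 powr (s + d) * ((1/2) powr d)^k))"
    using small q r \<open>0 \<le> t\<close>
    by (intro suminf_le summableI)
       (auto simp: product ennreal_mult[symmetric] intro!: order_trans[OF mult_left_mono[OF small]])
  also have "\<dots> = ennreal (\<kappa> * t * 2 powr (s + d) / (1 - (1/2) powr d))"
    using sums_mult[OF geometric_sums[of "(1/2) powr d"], of "\<kappa> * t * 2 powr (s + d)"] q \<open>0 \<le> t\<close>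
    by (intro suminf_ennreal_eq) (auto simp: field_simps)
  also have "\<kappa> * t * 2 powr (s + d) / (1 - (1/2) powr d) = t"
    using q \<open>0 < d\<close> by (simp add: \<kappa>_def)
  finally show False by simp
qed

lemma hcontent_le_emeasure_of_heavy_balls:
  fixes \<mu> :: "'a::euclidean_space measure"
  assumes sets: "sets \<mu> = sets borel" and G: "G \<in> sets borel" and "0 \<le> b" "0 \<le> K"
    and heavy: "\<And>x. x \<in> E \<Longrightarrow> \<exists>r. 0 < r \<and> r \<le> B \<and>
        ennreal (r powr b) \<le> ennreal K * emeasure \<mu> (ball x r \<inter> G)"
  shows "hcontent b E \<le> ennreal (omega_const b * 5 powr b * K) * emeasure \<mu> G"
proof -
  define c where "c = omega_const b * 5 powr b"
  have c: "0 \<le> c" using omega_const_pos[OF \<open>0 \<le> b\<close>] by (simp add: c_def)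
  have "\<forall>x\<in>E. \<exists>r. 0 < r \<and> r \<le> B \<and> ennreal (r powr b) \<le> ennreal K * emeasure \<mu> (ball x r \<inter> G)"
    using heavy by blast
  then obtain \<rho> where \<rho>: "\<And>x. x \<in> E \<Longrightarrow> 0 < \<rho> x \<and> \<rho> x \<le> B \<and>
      ennreal (\<rho> x powr b) \<le> ennreal K * emeasure \<mu> (ball x (\<rho> x) \<inter> G)"
    by (metis bchoice)
  obtain C where C: "countable C" "C \<subseteq> E"
     "pairwise (\<lambda>i j. disjnt (ball (id i) (\<rho> i)) (ball (id j) (\<rho> j))) C"
     "E \<subseteq> (\<Union>i\<in>C. ball (id i) (5 * \<rho> i))"
    by (rule Vitali_covering_lemma_balls[where S = E and K = E and a = id and r = \<rho> and B = B]) (use \<rho> in auto)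
  have disj: "disjoint_family_on (\<lambda>i. ball i (\<rho> i) \<inter> G) C"
    using C(3) by (auto simp: disjoint_family_on_def pairwise_def disjnt_def)
  have "hcontent b E \<le> (\<integral>\<^sup>+ i. ennreal (omega_const b * (5 * \<rho> i) powr b) \<partial>count_space C)"
    using C \<rho> by (intro hcontent_le_countable_cover) (auto dest!: less_imp_le)
  also have "\<dots> \<le> (\<integral>\<^sup>+ i. ennreal (c * K) * emeasure \<mu> (ball i (\<rho> i) \<inter> G) \<partial>count_space C)"
  proof (intro nn_integral_mono)
    fix i assume "i \<in> space (count_space C)"
    then have "i \<in> E" using C(2) by auto
    then have "ennreal (omega_const b * (5 * \<rho> i) powr b) = ennreal c * ennreal (\<rho> i powr b)"
      using \<rho> c by (simp add: c_def powr_mult ennreal_mult[symmetric] mult.assoc)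
    also have "\<dots> \<le> ennreal c * (ennreal K * emeasure \<mu> (ball i (\<rho> i) \<inter> G))"
      using \<rho>[OF \<open>i \<in> E\<close>] by (intro mult_left_mono) auto
    finally show "ennreal (omega_const b * (5 * \<rho> i) powr b)
        \<le> ennreal (c * K) * emeasure \<mu> (ball i (\<rho> i) \<inter> G)"
      using c \<open>0 \<le> K\<close> by (simp add: ennreal_mult mult.assoc)
  qed
  also have "\<dots> = ennreal (c * K) * emeasure \<mu> (\<Union>i\<in>C. ball i (\<rho> i) \<inter> G)"
    using C(1) disj G by (subst emeasure_UN_countable) (auto simp: nn_integral_cmult sets)
  also have "\<dots> \<le> ennreal (c * K) * emeasure \<mu> G"
    using G by (intro mult_left_mono emeasure_mono) (auto simp: sets)
  finally show ?thesis by (simp add: c_def)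
qed

lemma powr_le_of_two_mass_bounds:
  fixes r \<rho> c s d M v :: real
  assumes "0 < r" "0 < \<rho>" "0 < c"
    and lower: "c * r powr (s + d) * \<rho> powr (-d) < v" and upper: "v \<le> M * r powr s"
  shows "r powr (s + 2*d) \<le> M * \<rho> powr (2*d) / c^2 * v"
proof -
  define A where "A = c * r powr (s + d) * \<rho> powr (-d)"
  have "0 \<le> A" using assms by (simp add: A_def)
  then have "A * A \<le> v * (M * r powr s)"
    using lower upper by (intro mult_mono) (auto simp: A_def)
  moreover have "A * A = r powr s * (c^2 / \<rho> powr (2*d) * r powr (s + 2*d))"
  proof -
    have "r powr (s + d) * r powr (s + d) = r powr s * r powr (s + 2*d)"
      unfolding powr_add[symmetric] by (simp add: algebra_simps)
    moreover have "\<rho> powr (-d) * \<rho> powr (-d) = 1 / \<rho> powr (2*d)"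
      unfolding powr_add[symmetric] by (simp add: powr_minus_divide)
    moreover have "A * A = c^2 * (r powr (s + d) * r powr (s + d)) * (\<rho> powr (-d) * \<rho> powr (-d))"
      by (simp add: A_def power2_eq_square mult_ac)
    ultimately show ?thesis by simp
  qed
  ultimately have "r powr s * (c^2 / \<rho> powr (2*d) * r powr (s + 2*d)) \<le> r powr s * (M * v)"
    by (simp add: mult_ac)
  then have "c^2 / \<rho> powr (2*d) * r powr (s + 2*d) \<le> M * v"
    using \<open>0 < r\<close> by (subst (asm) mult_le_cancel_left_pos) auto
  then show ?thesis
    using assms by (simp add: field_simps)
qed

lemma exists_ball_mass_ge_of_local_riesz_potential:
  fixes mp mn :: "'a::euclidean_space measure" and x z :: 'a
  assumes sets: "sets mp = sets borel" "sets mn = sets borel"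
    and growth: "\<And>w r. 0 < r \<Longrightarrow> emeasure (variation mp mn) (ball w r) \<le> ennreal (M * r powr s)"
    and s: "s = real DIM('a) - \<alpha>" "0 < s" and "0 < d" "0 \<le> M" "0 < \<rho>" "0 < t" and x: "dist z x < \<rho>"
  defines "\<kappa> \<equiv> (1 - (1/2) powr d) / 2 powr (s + d)"
  assumes big: "ennreal t < (\<integral>\<^sup>+ y. riesz_kernel \<alpha> x y * indicator (ball z \<rho>) y \<partial>mp)
                + (\<integral>\<^sup>+ y. riesz_kernel \<alpha> x y * indicator (ball z \<rho>) y \<partial>mn)"
  shows "\<exists>r. 0 < r \<and> r \<le> 2 * \<rho> \<and> ennreal (r powr (s + 2*d))
    \<le> ennreal (M * \<rho> powr (2*d) / (\<kappa> * t)^2) * emeasure (variation mp mn) (ball x r \<inter> ball z \<rho>)"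
proof -
  let ?V = "variation mp mn"
  define r where "r k = 2 * \<rho> * (1/2)^k" for k :: nat
  have "0 < \<kappa>" using half_powr_less_one[OF \<open>0 < d\<close>] by (simp add: \<kappa>_def)
  note big
  also have "(\<integral>\<^sup>+ y. riesz_kernel \<alpha> x y * indicator (ball z \<rho>) y \<partial>mp)
      + (\<integral>\<^sup>+ y. riesz_kernel \<alpha> x y * indicator (ball z \<rho>) y \<partial>mn)
    \<le> (\<Sum>k. ennreal (2 powr s * r k powr (-s)) * emeasure mp (ball x (r k) \<inter> ball z \<rho>))
      + (\<Sum>k. ennreal (2 powr s * r k powr (-s)) * emeasure mn (ball x (r k) \<inter> ball z \<rho>))"
    unfolding r_def by (intro add_mono nn_integral_riesz_kernel_ball_le_dyadic_series sets s \<open>0 < \<rho>\<close> x)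
  also have "\<dots> = (\<Sum>k. ennreal (2 powr s * r k powr (-s)) * emeasure ?V (ball x (r k) \<inter> ball z \<rho>))"
    by (simp add: emeasure_variation sets suminf_add[symmetric] distrib_left)
  finally obtain k where k: "ennreal (\<kappa> * t * r k powr (s + d) * \<rho> powr (-d))
      < emeasure ?V (ball x (r k) \<inter> ball z \<rho>)"
    using exists_dyadic_radius_mass_gt[of s d \<rho> t "\<lambda>r. emeasure ?V (ball x r \<inter> ball z \<rho>)"]
      s \<open>0 < d\<close> \<open>0 < \<rho>\<close> \<open>0 < t\<close> unfolding r_def \<kappa>_def by force
  have r: "0 < r k" "r k \<le> 2 * \<rho>" using \<open>0 < \<rho>\<close> by (auto simp: r_def power_le_one)
  have "emeasure ?V (ball x (r k) \<inter> ball z \<rho>) \<le> emeasure ?V (ball x (r k))"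
    by (intro emeasure_mono) auto
  also have "\<dots> \<le> ennreal (M * r k powr s)" using growth r by simp
  finally obtain v where v: "emeasure ?V (ball x (r k) \<inter> ball z \<rho>) = ennreal v" "0 \<le> v"
      "v \<le> M * r k powr s"
    using \<open>0 \<le> M\<close> by (cases "emeasure ?V (ball x (r k) \<inter> ball z \<rho>)") (auto simp: ennreal_le_iff top_unique)
  have "\<kappa> * t * r k powr (s + d) * \<rho> powr (-d) < v"
    using k v \<open>0 < \<kappa>\<close> \<open>0 < t\<close> by (simp add: ennreal_less_iff)
  then have "r k powr (s + 2*d) \<le> M * \<rho> powr (2*d) / (\<kappa> * t)^2 * v"
    using \<open>0 < \<kappa>\<close> \<open>0 < t\<close> \<open>0 < \<rho>\<close> r v by (intro powr_le_of_two_mass_bounds) auto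
  then show ?thesis
    using r v \<open>0 \<le> M\<close> by (intro exI[of _ "r k"]) (simp add: ennreal_mult[symmetric])
qed

lemma hcontent_local_riesz_potential_level_set_le:
  fixes mp mn :: "'a::euclidean_space measure" and z :: 'a
  assumes sets: "sets mp = sets borel" "sets mn = sets borel"
    and growth: "\<And>w r. 0 < r \<Longrightarrow> emeasure (variation mp mn) (ball w r) \<le> ennreal (M * r powr s)"
    and s: "s = real DIM('a) - \<alpha>" "0 < s" and "0 < d" "0 \<le> M" "0 < \<rho>" "0 < t"
    and E: "E \<subseteq> ball z \<rho>"
  defines "\<kappa> \<equiv> (1 - (1/2) powr d) / 2 powr (s + d)"
  shows "hcontent (s + 2*d) {x \<in> E. ennreal t < (\<integral>\<^sup>+ y. riesz_kernel \<alpha> x y * indicator (ball z \<rho>) y \<partial>mp)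
                + (\<integral>\<^sup>+ y. riesz_kernel \<alpha> x y * indicator (ball z \<rho>) y \<partial>mn)}
    \<le> ennreal (omega_const (s + 2*d) * 5 powr (s + 2*d) * M^2 * \<rho> powr (s + 2*d) / (\<kappa> * t)^2)"
    (is "hcontent _ ?E \<le> _")
proof -
  define K where "K = M * \<rho> powr (2*d) / (\<kappa> * t)^2"
  have "0 \<le> omega_const (s + 2*d)" using omega_const_pos[of "s + 2*d"] s \<open>0 < d\<close> by simp
  have heavy: "\<exists>r. 0 < r \<and> r \<le> 2 * \<rho> \<and>
      ennreal (r powr (s + 2*d)) \<le> ennreal K * emeasure (variation mp mn) (ball x r \<inter> ball z \<rho>)"
    if "x \<in> ?E" for x
    using that E unfolding K_def \<kappa>_def
    by (intro exists_ball_mass_ge_of_local_riesz_potential[OF sets growth s \<open>0 < d\<close> \<open>0 \<le> M\<close> \<open>0 < \<rho>\<close> \<open>0 < t\<close>])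
       auto
  have "hcontent (s + 2*d) ?E \<le> ennreal (omega_const (s + 2*d) * 5 powr (s + 2*d) * K) * emeasure (variation mp mn) (ball z \<rho>)"
    using s \<open>0 < d\<close> \<open>0 \<le> M\<close> by (intro hcontent_le_emeasure_of_heavy_balls[OF sets_variation _ _ _ heavy]) (auto simp: K_def)
  also have "\<dots> \<le> ennreal (omega_const (s + 2*d) * 5 powr (s + 2*d) * K) * ennreal (M * \<rho> powr s)"
    using growth \<open>0 < \<rho>\<close> by (intro mult_left_mono) auto
  also have "\<dots> = ennreal (omega_const (s + 2*d) * 5 powr (s + 2*d) * M^2 * \<rho> powr (s + 2*d) / (\<kappa> * t)^2)"
  proof -
    have "\<rho> powr (2*d) * \<rho> powr s = \<rho> powr (s + 2*d)" by (simp add: powr_add[symmetric] add.commute)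
    then have "omega_const (s + 2*d) * 5 powr (s + 2*d) * K * (M * \<rho> powr s)
        = omega_const (s + 2*d) * 5 powr (s + 2*d) * M^2 * \<rho> powr (s + 2*d) / (\<kappa> * t)^2"
      unfolding K_def power2_eq_square by (simp add: mult_ac)
    then show ?thesis
      using \<open>0 \<le> omega_const (s + 2*d)\<close> \<open>0 \<le> M\<close> by (simp add: K_def ennreal_mult[symmetric])
  qed
  finally show ?thesis .
qed

section \<open>Choquet integrals over cubes\<close>

lemma dist_center_cube_less:
  fixes a x :: "'a::euclidean_space"
  assumes "0 < l" and x: "x \<in> cbox a (a + l *\<^sub>R One)"
  shows "dist (a + (l/2) *\<^sub>R One) x < real DIM('a) * l"
proof -
  have "\<bar>(a + (l/2) *\<^sub>R One - x) \<bullet> i\<bar> \<le> l/2" if "i \<in> Basis" for i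
  proof -
    have "a \<bullet> i \<le> x \<bullet> i" "x \<bullet> i \<le> a \<bullet> i + l"
      using x that by (auto simp: mem_box inner_add_left inner_sum_Basis)
    then have "\<bar>a \<bullet> i + l / 2 - x \<bullet> i\<bar> \<le> l/2" by linarith
    then show ?thesis using that by (simp add: inner_add_left inner_diff_left inner_sum_Basis)
  qed
  then have "norm (a + (l/2) *\<^sub>R One - x) \<le> (\<Sum>i\<in>(Basis::'a set). l/2)"
    by (intro order_trans[OF norm_le_l1] sum_mono)
  also have "\<dots> < real DIM('a) * l" using \<open>0 < l\<close> by simp
  finally show ?thesis by (simp add: dist_norm)
qed

lemma nn_integral_nonneg_le_of_decay:
  fixes f :: "real \<Rightarrow> ennreal"
  assumes "0 \<le> H" "0 \<le> T" "0 \<le> A" "A = 0 \<or> 0 < T"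
    and small: "\<And>t. 0 \<le> t \<Longrightarrow> f t \<le> ennreal H"
    and large: "\<And>t. T < t \<Longrightarrow> f t \<le> ennreal (A * t powr -2)"
  shows "(\<integral>\<^sup>+ t. indicator {0..} t * f t \<partial>lborel) \<le> ennreal (H * T + A / T)"
proof -
  have "(\<integral>\<^sup>+ t. indicator {0..} t * f t \<partial>lborel)
      \<le> (\<integral>\<^sup>+ t. ennreal H * indicator {0..T} t + ennreal (indicator {T..} t * (A * t powr -2)) \<partial>lborel)"
  proof (intro nn_integral_mono)
    fix t :: real
    consider "t < 0" | "0 \<le> t" "t \<le> T" | "T < t" by linarith
    then show "indicator {0..} t * f t
        \<le> ennreal H * indicator {0..T} t + ennreal (indicator {T..} t * (A * t powr -2))"
      by cases (use small large \<open>0 \<le> T\<close> in \<open>auto simp: indicator_def add_increasing add_increasing2\<close>)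
  qed
  also have "\<dots> = ennreal (H * T) + (\<integral>\<^sup>+ t. ennreal (indicator {T..} t * (A * t powr -2)) \<partial>lborel)"
    using assms by (simp add: nn_integral_add nn_integral_cmult_indicator ennreal_mult)
  also have "(\<integral>\<^sup>+ t. ennreal (indicator {T..} t * (A * t powr -2)) \<partial>lborel) = ennreal (A / T)"
  proof (cases "0 < T")
    case True
    have "((\<lambda>t. A * t powr (-2)) has_integral A * (- (T powr (-2 + 1)) / (-2 + 1))) {T..}"
      using True by (intro has_integral_mult_right has_integral_powr_to_inf) auto
    then have "(\<integral>\<^sup>+ t. ennreal (indicator {T..} t * (A * t powr -2)) \<partial>lborel) = ennreal (A * (- (T powr (-2 + 1)) / (-2 + 1)))"
      using \<open>0 \<le> A\<close> by (intro nn_integral_has_integral_lebesgue) auto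
    then show ?thesis using True by (simp add: powr_minus divide_inverse)
  qed (use assms in auto)
  finally show ?thesis by (simp add: ennreal_plus[symmetric] assms del: ennreal_plus)
qed

lemma hcontent_level_set_le_of_pointwise_bound:
  fixes w :: "'a::euclidean_space \<Rightarrow> real" and L :: "'a \<Rightarrow> ennreal"
  assumes "0 < \<gamma>" "0 \<le> e" "0 \<le> X" and t: "4 * e < \<gamma> * t"
    and pointwise: "\<And>x. x \<in> Q \<Longrightarrow> ennreal (\<gamma> * \<bar>w x\<bar>) \<le> L x + ennreal (2 * e)"
    and level: "\<And>t. 0 < t \<Longrightarrow> hcontent b {x \<in> Q. ennreal t < L x} \<le> ennreal (X / t^2)"
  shows "hcontent b {x \<in> Q. t < \<bar>w x\<bar>} \<le> ennreal (4 * X / \<gamma>^2 * t powr -2)"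
proof -
  define t' where "t' = \<gamma> * t - 2 * e"
  have t': "\<gamma> * t / 2 \<le> t'" "0 < t'" using t assms by (auto simp: t'_def)
  have "0 < t" using t assms by (smt (verit) zero_less_mult_pos)
  have sub: "{x \<in> Q. t < \<bar>w x\<bar>} \<subseteq> {x \<in> Q. ennreal t' < L x}"
  proof safe
    fix x assume x: "x \<in> Q" "t < \<bar>w x\<bar>"
    then have "t' + 2 * e < \<gamma> * \<bar>w x\<bar>" using \<open>0 < \<gamma>\<close> by (simp add: t'_def)
    then have "ennreal (t' + 2 * e) < ennreal (\<gamma> * \<bar>w x\<bar>)"
      using t' \<open>0 \<le> e\<close> by (subst ennreal_less_iff) auto
    also have "\<dots> \<le> L x + ennreal (2 * e)" using pointwise x(1) .
    finally show "ennreal t' < L x"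
      using t' \<open>0 \<le> e\<close> by (cases "L x") (auto simp: ennreal_plus[symmetric] ennreal_less_iff simp del: ennreal_plus)
  qed
  have "hcontent b {x \<in> Q. t < \<bar>w x\<bar>} \<le> ennreal (X / t'^2)"
    using hcontent_mono[OF sub] level[OF \<open>0 < t'\<close>] by (rule order_trans)
  also have "\<dots> \<le> ennreal (X / (\<gamma> * t / 2)^2)"
    using t' \<open>0 < \<gamma>\<close> \<open>0 < t\<close> \<open>0 \<le> X\<close> by (intro ennreal_leI divide_left_mono power_mono) auto
  also have "X / (\<gamma> * t / 2)^2 = 4 * X / \<gamma>^2 * t powr -2"
    using \<open>0 < t\<close> \<open>0 < \<gamma>\<close> by (simp add: powr_minus powr_numeral field_simps)
  finally show ?thesis .
qed

lemma choquet_abs_le_of_pointwise_bound: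
  fixes w :: "'a::euclidean_space \<Rightarrow> real" and L :: "'a \<Rightarrow> ennreal"
  assumes "0 < \<gamma>" "0 \<le> e" "0 \<le> X" "X = 0 \<or> 0 < e" "0 \<le> b" "0 \<le> R" and Q: "Q \<subseteq> ball z R"
    and pointwise: "\<And>x. x \<in> Q \<Longrightarrow> ennreal (\<gamma> * \<bar>w x\<bar>) \<le> L x + ennreal (2 * e)"
    and level: "\<And>t. 0 < t \<Longrightarrow> hcontent b {x \<in> Q. ennreal t < L x} \<le> ennreal (X / t^2)"
  shows "choquet b Q (\<lambda>x. \<bar>w x\<bar>) \<le> ennreal (omega_const b * R powr b * (4 * e / \<gamma>) + X / (\<gamma> * e))"
proof -
  have "choquet b Q (\<lambda>x. \<bar>w x\<bar>)
      \<le> ennreal (omega_const b * R powr b * (4 * e / \<gamma>) + 4 * X / \<gamma>^2 / (4 * e / \<gamma>))"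
    unfolding choquet_def
  proof (rule nn_integral_nonneg_le_of_decay)
    show "hcontent b {x \<in> Q. t < \<bar>w x\<bar>} \<le> ennreal (omega_const b * R powr b)" for t
      using Q by (intro order_trans[OF hcontent_mono hcontent_ball_le] \<open>0 \<le> R\<close>) auto
    show "hcontent b {x \<in> Q. t < \<bar>w x\<bar>} \<le> ennreal (4 * X / \<gamma>^2 * t powr -2)" if "4 * e / \<gamma> < t" for t
      using that \<open>0 < \<gamma>\<close>
      by (intro hcontent_level_set_le_of_pointwise_bound[OF \<open>0 < \<gamma>\<close> \<open>0 \<le> e\<close> \<open>0 \<le> X\<close> _ pointwise level])
         (simp add: field_simps)
  qed (use assms omega_const_pos[of b] in auto)
  also have "4 * X / \<gamma>^2 / (4 * e / \<gamma>) = X / (\<gamma> * e)"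
    using \<open>0 < \<gamma>\<close> by (cases "e = 0") (simp_all add: power2_eq_square field_simps)
  finally show ?thesis .
qed

(* The bound of riesz_pot_cube_choquet_le for l = M = 1; see riesz_bmo_const_scaling. *)
definition riesz_bmo_const :: "real \<Rightarrow> real \<Rightarrow> real \<Rightarrow> real" where
  "riesz_bmo_const n \<alpha> \<epsilon> =
    (let s = n - \<alpha>; b = s + \<epsilon>; \<gamma> = riesz_const n \<alpha>; e = s * 2 powr (2 * s + 1);
         \<kappa> = (1 - (1/2) powr (\<epsilon>/2)) / 2 powr (s + \<epsilon>/2)
     in omega_const b * (n powr b * (4 * e / \<gamma>) + 5 powr b * (2 * n) powr b / (\<kappa>^2 * \<gamma> * e)))"

lemma riesz_bmo_const_pos:
  assumes "0 < \<alpha>" "\<alpha> < n" "0 < \<epsilon>"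
  shows "0 < riesz_bmo_const n \<alpha> \<epsilon>"
proof -
  have "0 < 1 - (1/2::real) powr (\<epsilon>/2)" using half_powr_less_one[of "\<epsilon>/2"] assms by simp
  then show ?thesis
    using assms riesz_const_pos[OF assms(1,2)] omega_const_pos[of "n - \<alpha> + \<epsilon>"]
    unfolding riesz_bmo_const_def Let_def by (intro mult_pos_pos add_pos_pos divide_pos_pos) auto
qed

lemma riesz_bmo_const_scaling:
  fixes n \<alpha> \<epsilon> l M :: real
  assumes "0 < \<alpha>" "\<alpha> < n" "0 < \<epsilon>" "0 < l"
  defines "b \<equiv> n - \<alpha> + \<epsilon>" and "\<gamma> \<equiv> riesz_const n \<alpha>"
    and "e \<equiv> (n - \<alpha>) * 2 powr (2 * (n - \<alpha>) + 1) * M"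
    and "\<kappa> \<equiv> (1 - (1/2) powr (\<epsilon>/2)) / 2 powr (n - \<alpha> + \<epsilon>/2)"
  shows "omega_const b * (n * l) powr b * (4 * e / \<gamma>)
      + omega_const b * 5 powr b * M^2 * (2 * (n * l)) powr b / \<kappa>^2 / (\<gamma> * e)
    = riesz_bmo_const n \<alpha> \<epsilon> * l powr b * M"
proof -
  define e\<^sub>0 where "e\<^sub>0 = (n - \<alpha>) * 2 powr (2 * (n - \<alpha>) + 1)"
  have "0 < \<gamma>" "0 < e\<^sub>0" "0 < \<kappa>"
    using assms riesz_const_pos half_powr_less_one[of "\<epsilon>/2"] by (simp_all add: \<gamma>_def e\<^sub>0_def \<kappa>_def)
  moreover have "riesz_bmo_const n \<alpha> \<epsilon>
      = omega_const b * (n powr b * (4 * e\<^sub>0 / \<gamma>) + 5 powr b * (2 * n) powr b / (\<kappa>^2 * \<gamma> * e\<^sub>0))"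
    by (simp add: riesz_bmo_const_def Let_def b_def \<gamma>_def e\<^sub>0_def \<kappa>_def)
  moreover have "(2 * (n * l)) powr b = (2 * n) powr b * l powr b" "(n * l) powr b = n powr b * l powr b"
    using assms by (simp_all add: powr_mult[symmetric] mult.assoc)
  ultimately show ?thesis
    unfolding e_def e\<^sub>0_def[symmetric] by (cases "M = 0") (simp_all add: power2_eq_square field_simps)
qed

lemma riesz_pot_cube_choquet_le:
  fixes mp mn :: "'a::euclidean_space measure" and a :: 'a
  assumes "0 < \<alpha>" "\<alpha> < real DIM('a)" "0 < \<epsilon>"
    and sets: "sets mp = sets borel" "sets mn = sets borel" and "0 \<le> M"
    and growth: "\<And>w r. 0 < r \<Longrightarrow>
      emeasure (variation mp mn) (ball w r) \<le> ennreal (M * r powr (real DIM('a) - \<alpha>))"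
    and "0 < l"
  shows "\<exists>c. choquet (real DIM('a) - \<alpha> + \<epsilon>) (cbox a (a + l *\<^sub>R One)) (\<lambda>x. \<bar>riesz_pot \<alpha> mp mn x - c\<bar>)
    \<le> ennreal (riesz_bmo_const (real DIM('a)) \<alpha> \<epsilon> * l powr (real DIM('a) - \<alpha> + \<epsilon>) * M)"
proof -
  define n s b d \<gamma> e\<^sub>0 \<kappa> where "n = real DIM('a)" and "s = n - \<alpha>" and "b = s + \<epsilon>" and "d = \<epsilon>/2"
    and "\<gamma> = riesz_const n \<alpha>" and "e\<^sub>0 = s * 2 powr (2 * s + 1)"
    and "\<kappa> = (1 - (1/2) powr d) / 2 powr (s + d)"
  define R z Q where "R = n * l" and "z = a + (l/2) *\<^sub>R One" and "Q = cbox a (a + l *\<^sub>R One)"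
  define Loc where "Loc x = (\<integral>\<^sup>+ y. riesz_kernel \<alpha> x y * indicator (ball z (2*R)) y \<partial>mp)
    + (\<integral>\<^sup>+ y. riesz_kernel \<alpha> x y * indicator (ball z (2*R)) y \<partial>mn)" for x
  define F where "F \<mu> = (\<integral>\<^sup>+ y. riesz_kernel \<alpha> z y * indicator (- ball z (2*R)) y \<partial>\<mu>)" for \<mu>
  define X where "X = omega_const b * 5 powr b * M^2 * (2*R) powr b / \<kappa>^2"
  have s: "s = real DIM('a) - \<alpha>" "0 < s" and b: "b = s + 2*d" "0 < b" and "0 < d"
    using assms by (simp_all add: n_def s_def b_def d_def)
  have "0 < \<gamma>" "0 < R" "0 < e\<^sub>0" "0 < \<kappa>" "0 \<le> X"
    using assms s b riesz_const_pos[of \<alpha> n] half_powr_less_one[OF \<open>0 < d\<close>] omega_const_pos[of b]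
    by (simp_all add: \<gamma>_def R_def n_def e\<^sub>0_def \<kappa>_def X_def)
  have inQ: "Q \<subseteq> ball z R"
    using dist_center_cube_less[OF \<open>0 < l\<close>] by (auto simp: z_def R_def n_def Q_def)
  have growth': "\<And>w r. 0 < r \<Longrightarrow> emeasure (variation mp mn) (ball w r) \<le> ennreal (M * r powr s)"
    using growth s by simp
  have pointwise: "ennreal (\<gamma> * \<bar>riesz_pot \<alpha> mp mn x - signed_potential \<gamma> (F mp) (F mn)\<bar>)
      \<le> Loc x + ennreal (2 * (e\<^sub>0 * M))" if "x \<in> Q" for x
    using riesz_pot_oscillation_le[OF sets growth' s \<open>0 < \<alpha>\<close> \<open>0 \<le> M\<close>] inQ that
    by (auto simp: F_def Loc_def \<gamma>_def n_def e\<^sub>0_def mult.assoc)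
  have level: "hcontent b {x \<in> Q. ennreal t < Loc x} \<le> ennreal (X / t^2)" if "0 < t" for t
    using hcontent_local_riesz_potential_level_set_le[OF sets growth' s \<open>0 < d\<close> \<open>0 \<le> M\<close> _ that,
        of "2*R" Q z, folded \<kappa>_def b(1) Loc_def] inQ \<open>0 < R\<close>
    by (force simp: X_def power_mult_distrib)
  have "choquet b Q (\<lambda>x. \<bar>riesz_pot \<alpha> mp mn x - signed_potential \<gamma> (F mp) (F mn)\<bar>)
      \<le> ennreal (omega_const b * R powr b * (4 * (e\<^sub>0 * M) / \<gamma>) + X / (\<gamma> * (e\<^sub>0 * M)))"
    using \<open>0 < \<gamma>\<close> \<open>0 < e\<^sub>0\<close> \<open>0 \<le> M\<close> \<open>0 \<le> X\<close> \<open>0 < b\<close> \<open>0 < R\<close>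
    by (intro choquet_abs_le_of_pointwise_bound[OF _ _ _ _ _ _ inQ pointwise level]) (auto simp: X_def)
  also have "omega_const b * R powr b * (4 * (e\<^sub>0 * M) / \<gamma>) + X / (\<gamma> * (e\<^sub>0 * M))
      = riesz_bmo_const n \<alpha> \<epsilon> * l powr b * M"
    using riesz_bmo_const_scaling[OF \<open>0 < \<alpha>\<close> _ \<open>0 < \<epsilon>\<close> \<open>0 < l\<close>, of n M] assms
    by (simp add: R_def X_def \<gamma>_def e\<^sub>0_def \<kappa>_def b_def s_def d_def n_def mult.assoc)
  finally show ?thesis by (auto simp: b_def s_def n_def Q_def)
qed

lemma bmo_norm_le_of_cubes:
  fixes u :: "'a::euclidean_space \<Rightarrow> real"
  assumes "0 \<le> K"
    and cube: "\<And>a l. 0 < l \<Longrightarrow> \<exists>c. choquet \<beta> (cbox a (a + l *\<^sub>R One)) (\<lambda>x. \<bar>u x - c\<bar>) \<le> ennreal (K * l powr \<beta>)"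
  shows "bmo_norm \<beta> u \<le> ennreal K"
  unfolding bmo_norm_def
proof (rule SUP_least, clarify)
  fix a :: 'a and l :: real assume "0 < l"
  then obtain c where c: "choquet \<beta> (cbox a (a + l *\<^sub>R One)) (\<lambda>x. \<bar>u x - c\<bar>) \<le> ennreal (K * l powr \<beta>)"
    using cube by blast
  have "(INF c. ennreal (l powr - \<beta>) * choquet \<beta> (cbox a (a + l *\<^sub>R One)) (\<lambda>x. \<bar>u x - c\<bar>))
      \<le> ennreal (l powr - \<beta>) * choquet \<beta> (cbox a (a + l *\<^sub>R One)) (\<lambda>x. \<bar>u x - c\<bar>)"
    by (rule INF_lower) simp
  also have "\<dots> \<le> ennreal (l powr - \<beta>) * ennreal (K * l powr \<beta>)"
    by (intro mult_left_mono c) simp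
  also have "\<dots> = ennreal K"
    using \<open>0 < l\<close> \<open>0 \<le> K\<close> by (simp add: ennreal_mult[symmetric] powr_minus field_simps)
  finally show "(INF c. ennreal (snd (a, l) powr - \<beta>) *
      choquet \<beta> (cbox (fst (a, l)) (fst (a, l) + snd (a, l) *\<^sub>R One)) (\<lambda>x. \<bar>u x - c\<bar>)) \<le> ennreal K"
    by simp
qed

theorem theorem1p8:
  fixes \<alpha> \<epsilon> :: real
  assumes "0 < \<alpha>" "\<alpha> < real DIM('a::euclidean_space)" "0 < \<epsilon>" "\<epsilon> \<le> \<alpha>"
  shows "\<exists>C>0. \<forall>(mp :: 'a measure) mn.
     signed_radon mp mn \<and> morrey_norm (real DIM('a) - \<alpha>) mp mn < \<infinity> \<and>
     (\<forall>K. compact K \<longrightarrow> L1_content (real DIM('a) - \<alpha> + \<epsilon>) K (riesz_pot \<alpha> mp mn)) \<longrightarrow>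
     bmo_norm (real DIM('a) - \<alpha> + \<epsilon>) (riesz_pot \<alpha> mp mn)
       \<le> ennreal C * morrey_norm (real DIM('a) - \<alpha>) mp mn"
proof (intro exI[of _ "riesz_bmo_const (real DIM('a)) \<alpha> \<epsilon>"] conjI allI impI)
  show "0 < riesz_bmo_const (real DIM('a)) \<alpha> \<epsilon>"
    using assms by (intro riesz_bmo_const_pos)
  fix mp mn :: "'a measure"
  assume "signed_radon mp mn \<and> morrey_norm (real DIM('a) - \<alpha>) mp mn < \<infinity> \<and>
     (\<forall>K. compact K \<longrightarrow> L1_content (real DIM('a) - \<alpha> + \<epsilon>) K (riesz_pot \<alpha> mp mn))"
  then have sets: "sets mp = sets borel" "sets mn = sets borel"
    and finite: "morrey_norm (real DIM('a) - \<alpha>) mp mn < \<infinity>"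
    by (auto simp: signed_radon_def)
  define M where "M = enn2real (morrey_norm (real DIM('a) - \<alpha>) mp mn)"
  have M: "morrey_norm (real DIM('a) - \<alpha>) mp mn = ennreal M" "0 \<le> M"
    using finite by (simp_all add: M_def less_top)
  have growth: "emeasure (variation mp mn) (ball w r) \<le> ennreal (M * r powr (real DIM('a) - \<alpha>))"
    if "0 < r" for w r
    using variation_ball_le_morrey_norm[OF sets that, where x = w and s = "real DIM('a) - \<alpha>"] M
    by (simp add: ennreal_mult)
  have "bmo_norm (real DIM('a) - \<alpha> + \<epsilon>) (riesz_pot \<alpha> mp mn)
      \<le> ennreal (riesz_bmo_const (real DIM('a)) \<alpha> \<epsilon> * M)"
    using riesz_pot_cube_choquet_le[OF assms(1-3) sets M(2) growth] riesz_bmo_const_pos[OF assms(1-3)] M(2)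
    by (intro bmo_norm_le_of_cubes) (auto simp: mult_ac)
  then show "bmo_norm (real DIM('a) - \<alpha> + \<epsilon>) (riesz_pot \<alpha> mp mn)
      \<le> ennreal (riesz_bmo_const (real DIM('a)) \<alpha> \<epsilon>) * morrey_norm (real DIM('a) - \<alpha>) mp mn"
    using M riesz_bmo_const_pos[OF assms(1-3)] by (simp add: ennreal_mult)
qed

end
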